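(* Let $q$ be a prime power, $m$ a positive integer with $\gcd(m,q)=1$, $\lambda\in\mathbb{F}_q^*$, and $R_\lambda=\mathbb{F}_q[x]/\langle x^m-\lambda\rangle$. Let $C$ and $D$ be one-generator $\lambda$-quasi-twisted codes of length $2m$ and index $2$ over $\mathbb{F}_q$, i.e. $C$ is the $R_\lambda$-submodule of $R_\lambda^2$ generated by $(g_{11}(x),g_{12}(x))$ and $D$ is the $R_\lambda$-submodule generated by $(f_{11}(x),f_{12}(x))$, where $g_{11}(x)\mid x^m-\lambda$ and $f_{11}(x)\mid x^m-\lambda$. Then $(C,D)$ is a linear complementary pair of codes if and only if: (A) $\gcd(g_{11}(x),g_{12}(x))=1$; (B) $\gcd(f_{11}(x),f_{12}(x))=1$; (C) $\gcd\big(x^m-\lambda,\,g_{11}(x)f_{12}(x)-g_{12}(x)f_{11}(x)\big)=1$.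
   Context: A pair $(C,D)$ of $\mathbb{F}_q$-linear codes of the same length $n$ is a linear complementary pair (LCP) of codes if $C\cap D=\{0\}$ and $C+D=\mathbb{F}_q^n$. For $\lambda\in\mathbb{F}_q^*$, $T_\lambda(x_0,\dots,x_{n-1})=(\lambda x_{n-1},x_0,\dots,x_{n-2})$; a linear code $C\subseteq\mathbb{F}_q^{2m}$ is $\lambda$-quasi-twisted of index $2$ if $T_\lambda^2(C)\subseteq C$, and it is identified with an $R_\lambda$-submodule of $R_\lambda^2$ via $(c_{0,0},c_{0,1},\dots,c_{m-1,0},c_{m-1,1})\mapsto(c_0(x),c_1(x))$, $c_j(x)=\sum_i c_{i,j}x^i$; elements of $R_\lambda$ are represented by polynomials in $\mathbb{F}_q[x]$. *)

theory Defs
  imports "HOL-Computational_Algebra.Computational_Algebra"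
begin

definition xm_minus :: "nat \<Rightarrow> 'a::field \<Rightarrow> 'a poly" where
  "xm_minus m lam = monom 1 m - [:lam:]"

text \<open>The identification R_lambda^2 -> F_q^(2m): the pair (c0,c1) of reduced
  polynomials (degree < m) corresponds to the vector
  (c_{0,0}, c_{0,1}, c_{1,0}, c_{1,1}, ..., c_{m-1,0}, c_{m-1,1}),
  where c_j = sum_i c_{i,j} x^i.\<close>
definition qt_vec :: "nat \<Rightarrow> 'a::zero poly \<Rightarrow> 'a poly \<Rightarrow> 'a list" where
  "qt_vec m c0 c1 = map (\<lambda>k. coeff (if even k then c0 else c1) (k div 2)) [0..<2*m]"

definition one_gen_qt_code :: "nat \<Rightarrow> 'a::field \<Rightarrow> 'a poly \<Rightarrow> 'a poly \<Rightarrow> 'a list set" where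
  "one_gen_qt_code m lam g1 g2 =
     {qt_vec m ((a * g1) mod xm_minus m lam) ((a * g2) mod xm_minus m lam) | a. True}"

definition is_LCP :: "nat \<Rightarrow> 'a::comm_monoid_add list set \<Rightarrow> 'a list set \<Rightarrow> bool" where
  "is_LCP n C D \<longleftrightarrow>
     C \<inter> D = {replicate n 0} \<and>
     {map2 (+) c d | c d. c \<in> C \<and> d \<in> D} = {v. length v = n}"

end

theory Submission
  imports Defs
begin

text \<open>Write M = x^m - lambda and d = g11 f12 - g12 f11.  The sum of the two codes is the
  image of (a, b) \<mapsto> (a, b) N over R_lambda, where N is the 2 x 2 matrix with rows
  (g11, g12) and (f11, f12), and d is the determinant of N.  If this image is everything,
  preimages of the unit vectors give a matrix inverse to N modulo M, so d is a unit
  modulo M; conversely, if d is invertible modulo M, Cramer's rule solves every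
  (a, b) N = (u, w), and it also shows that a word lying in both codes, which gives a
  solution of (a, -b) N = 0, vanishes.  Finally, since g11 and f11 divide M, a common
  divisor of g11 and g12 (or of f11 and f12) divides both M and d, so (A) and (B) follow
  from (C).\<close>

definition rows_span_mod :: "'a::comm_ring_1 \<Rightarrow> 'a \<Rightarrow> 'a \<Rightarrow> 'a \<Rightarrow> 'a \<Rightarrow> bool" where
  "rows_span_mod M g11 g12 f11 f12 \<longleftrightarrow>
     (\<forall>u w. \<exists>a b. M dvd a*g11 + b*f11 - u \<and> M dvd a*g12 + b*f12 - w)"

lemma coprime_det_if_rows_span_mod:
  fixes M g11 g12 f11 f12 :: "'a::{comm_ring_1,algebraic_semidom}"
  assumes "M dvd a*g11 + b*f11 - 1" "M dvd a*g12 + b*f12"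
    and "M dvd c*g11 + e*f11" "M dvd c*g12 + e*f12 - 1"
  shows "coprime M (g11*f12 - g12*f11)"
proof -
  have "(a*e - b*c) * (g11*f12 - g12*f11) - 1 =
      (a*g11 + b*f11 - 1) * (c*g12 + e*f12) + (c*g12 + e*f12 - 1)
      - (a*g12 + b*f12) * (c*g11 + e*f11)"
    by (simp add: algebra_simps)
  also have "M dvd \<dots>"
    by (rule dvd_diff[OF dvd_add[OF dvd_mult2[OF assms(1)] assms(4)] dvd_mult2[OF assms(2)]])
  finally have inverse: "M dvd (a*e - b*c) * (g11*f12 - g12*f11) - 1" .
  show ?thesis
  proof (rule coprimeI)
    fix z assume "z dvd M" "z dvd g11*f12 - g12*f11"
    with inverse have "z dvd (a*e - b*c) * (g11*f12 - g12*f11)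
        - ((a*e - b*c) * (g11*f12 - g12*f11) - 1)"
      by (meson dvd_diff dvd_mult dvd_trans)
    then show "is_unit z"
      by simp
  qed
qed

lemma rows_span_mod_if_coprime_det:
  fixes M g11 g12 f11 f12 :: "'a::euclidean_ring_gcd"
  assumes "coprime M (g11*f12 - g12*f11)"
  obtains a b where "M dvd a*g11 + b*f11 - u" and "M dvd a*g12 + b*f12 - w"
proof -
  define d where "d = g11*f12 - g12*f11"
  obtain s e where "s * M + e * d = 1"
    using assms bezout_coefficients_fst_snd[of M d] by (metis coprime_iff_gcd_eq_1 d_def)
  then have "e * d - 1 = M * (- s)"
    by (simp add: algebra_simps)
  then have inverse: "M dvd e * d - 1"
    by simp
  define a where "a = e * (u*f12 - w*f11)"
  define b where "b = e * (w*g11 - u*g12)"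
  have "a*g11 + b*f11 - u = u * (e*d - 1)" and "a*g12 + b*f12 - w = w * (e*d - 1)"
    unfolding a_def b_def d_def by (simp_all add: algebra_simps)
  with inverse show thesis
    by (intro that[of a b]) simp_all
qed

lemma rows_span_mod_iff_coprime_det:
  fixes M g11 g12 f11 f12 :: "'a::euclidean_ring_gcd"
  shows "rows_span_mod M g11 g12 f11 f12 \<longleftrightarrow> coprime M (g11*f12 - g12*f11)"
proof
  assume span: "rows_span_mod M g11 g12 f11 f12"
  obtain a b where "M dvd a*g11 + b*f11 - 1" "M dvd a*g12 + b*f12"
    using span[unfolded rows_span_mod_def, rule_format, of 1 0] by auto
  moreover obtain c e where "M dvd c*g11 + e*f11" "M dvd c*g12 + e*f12 - 1"
    using span[unfolded rows_span_mod_def, rule_format, of 0 1] by auto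
  ultimately show "coprime M (g11*f12 - g12*f11)"
    by (rule coprime_det_if_rows_span_mod)
qed (metis rows_span_mod_def rows_span_mod_if_coprime_det)

lemma dvd_coeff_if_coprime_det:
  fixes M g11 g12 f11 f12 :: "'a::ring_gcd"
  assumes "coprime M (g11*f12 - g12*f11)"
    and "M dvd a*g11 + b*f11" "M dvd a*g12 + b*f12"
  shows "M dvd a"
proof -
  have "a * (g11*f12 - g12*f11) = (a*g11 + b*f11) * f12 - (a*g12 + b*f12) * f11"
    by (simp add: algebra_simps)
  also have "M dvd \<dots>"
    by (rule dvd_diff[OF dvd_mult2[OF assms(2)] dvd_mult2[OF assms(3)]])
  finally have "M dvd a * (g11*f12 - g12*f11)" .
  with assms(1) show ?thesis
    by (simp add: coprime_dvd_mult_left_iff)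
qed

lemma coprime_if_coprime_det:
  fixes M g1 g2 f1 f2 :: "'a::{comm_ring_1,algebraic_semidom}"
  assumes "g1 dvd M" "coprime M (g1*f2 - g2*f1)"
  shows "coprime g1 g2"
proof (rule coprimeI)
  fix c assume "c dvd g1" "c dvd g2"
  then have "c dvd M" "c dvd g1*f2 - g2*f1"
    using assms(1) by (auto intro: dvd_trans)
  with assms(2) show "is_unit c"
    using coprime_common_divisor by blast
qed

lemma length_qt_vec [simp]: "length (qt_vec m c0 c1) = 2*m"
  by (simp add: qt_vec_def)

lemma qt_vec_add: "map2 (+) (qt_vec m a0 a1) (qt_vec m b0 b1) = qt_vec m (a0 + b0) (a1 + b1)"
  by (rule nth_equalityI) (auto simp: qt_vec_def)

lemma qt_vec_zero: "qt_vec m 0 0 = replicate (2*m) 0"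
  by (rule nth_equalityI) (auto simp: qt_vec_def)

lemma qt_vec_inject:
  assumes "degree c0 < m" "degree c1 < m" "degree d0 < m" "degree d1 < m"
    and "qt_vec m c0 c1 = qt_vec m d0 d1"
  shows "c0 = d0" and "c1 = d1"
proof -
  have "coeff c0 i = coeff d0 i \<and> coeff c1 i = coeff d1 i" for i
  proof (cases "i < m")
    case True
    have "qt_vec m c0 c1 ! (2*i) = qt_vec m d0 d1 ! (2*i)"
      and "qt_vec m c0 c1 ! (2*i+1) = qt_vec m d0 d1 ! (2*i+1)"
      using assms(5) by simp_all
    with True show ?thesis
      by (simp add: qt_vec_def)
  next
    case False
    with assms(1-4) show ?thesis
      by (simp add: coeff_eq_0)
  qed
  then show "c0 = d0" and "c1 = d1"
    by (simp_all add: poly_eq_iff)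
qed

lemma qt_vec_surj:
  assumes "m > 0" "length v = 2*m"
  obtains c0 c1 where "degree c0 < m" "degree c1 < m" "v = qt_vec m c0 c1"
proof -
  define c0 where "c0 = Poly (map (\<lambda>i. v ! (2*i)) [0..<m])"
  define c1 where "c1 = Poly (map (\<lambda>i. v ! (2*i+1)) [0..<m])"
  have coeff_c0: "coeff c0 i = (if i < m then v ! (2*i) else 0)" for i
    by (simp add: c0_def nth_default_def)
  have coeff_c1: "coeff c1 i = (if i < m then v ! (2*i+1) else 0)" for i
    by (simp add: c1_def nth_default_def)
  have "degree c0 \<le> m - 1" "degree c1 \<le> m - 1"
    by (auto intro!: degree_le simp: coeff_c0 coeff_c1)
  moreover have "v = qt_vec m c0 c1"
  proof (rule nth_equalityI)
    fix k assume "k < length v"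
    then show "v ! k = qt_vec m c0 c1 ! k"
      using assms(2) by (auto simp: qt_vec_def coeff_c0 coeff_c1 elim!: evenE oddE)
  qed (use assms(2) in simp)
  ultimately show thesis
    using assms(1) by (intro that) auto
qed

lemma degree_xm_minus:
  assumes "m > 0"
  shows "degree (xm_minus m lam) = m"
proof -
  have "xm_minus m lam = monom 1 m + [:-lam:]"
    by (simp add: xm_minus_def)
  also have "degree \<dots> = m"
    using assms by (simp add: degree_add_eq_left degree_monom_eq)
  finally show ?thesis .
qed

lemma degree_mod_xm_minus_less:
  assumes "m > 0"
  shows "degree (p mod xm_minus m lam) < m"
proof -
  have "xm_minus m lam \<noteq> 0"
    using degree_xm_minus[OF assms, of lam] assms by auto
  then show ?thesis
    using degree_mod_less[of "xm_minus m lam" p] degree_xm_minus[OF assms, of lam] assms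
    by auto
qed

definition qt_encode :: "nat \<Rightarrow> 'a::field \<Rightarrow> 'a poly \<Rightarrow> 'a poly \<Rightarrow> 'a list" where
  "qt_encode m lam u w = qt_vec m (u mod xm_minus m lam) (w mod xm_minus m lam)"

lemma one_gen_qt_code_eq:
  "one_gen_qt_code m lam g1 g2 = {qt_encode m lam (a*g1) (a*g2) | a. True}"
  by (simp add: one_gen_qt_code_def qt_encode_def)

lemma length_qt_encode [simp]: "length (qt_encode m lam u w) = 2*m"
  by (simp add: qt_encode_def)

lemma qt_encode_add:
  "map2 (+) (qt_encode m lam u w) (qt_encode m lam u' w') = qt_encode m lam (u + u') (w + w')"
  by (simp add: qt_encode_def qt_vec_add poly_mod_add_left)

lemma qt_encode_zero: "qt_encode m lam 0 0 = replicate (2*m) 0"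
  by (simp add: qt_encode_def qt_vec_zero)

lemma qt_encode_eq_iff:
  assumes "m > 0"
  shows "qt_encode m lam u w = qt_encode m lam u' w'
    \<longleftrightarrow> xm_minus m lam dvd u - u' \<and> xm_minus m lam dvd w - w'"
  unfolding qt_encode_def mod_eq_dvd_iff[symmetric]
  using qt_vec_inject[OF degree_mod_xm_minus_less[OF assms] degree_mod_xm_minus_less[OF assms]
      degree_mod_xm_minus_less[OF assms] degree_mod_xm_minus_less[OF assms]]
  by auto

lemma qt_encode_surj:
  assumes "m > 0" "length v = 2*m"
  obtains u w where "v = qt_encode m lam u w"
proof -
  obtain c0 c1 where "degree c0 < m" "degree c1 < m" "v = qt_vec m c0 c1"
    using qt_vec_surj[OF assms] .
  then have "v = qt_encode m lam c0 c1"
    using assms(1) by (simp add: qt_encode_def mod_poly_less degree_xm_minus)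
  then show thesis ..
qed

lemma one_gen_qt_codes_sum_eq:
  "{map2 (+) c d | c d. c \<in> one_gen_qt_code m lam g11 g12 \<and> d \<in> one_gen_qt_code m lam f11 f12}
    = {qt_encode m lam (a*g11 + b*f11) (a*g12 + b*f12) | a b. True}"
  (is "?sums = ?images")
proof (intro equalityI subsetI)
  fix x assume "x \<in> ?sums"
  then obtain a b where
    "x = map2 (+) (qt_encode m lam (a*g11) (a*g12)) (qt_encode m lam (b*f11) (b*f12))"
    by (auto simp: one_gen_qt_code_eq)
  then show "x \<in> ?images"
    by (auto simp: qt_encode_add)
next
  fix x assume "x \<in> ?images"
  then obtain a b where
    "x = map2 (+) (qt_encode m lam (a*g11) (a*g12)) (qt_encode m lam (b*f11) (b*f12))"
    by (auto simp: qt_encode_add)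
  then show "x \<in> ?sums"
    by (auto simp: one_gen_qt_code_eq)
qed

lemma one_gen_qt_codes_sum_eq_all_iff:
  assumes "m > 0"
  shows "{map2 (+) c d | c d. c \<in> one_gen_qt_code m lam g11 g12 \<and> d \<in> one_gen_qt_code m lam f11 f12}
      = {v. length v = 2*m}
    \<longleftrightarrow> rows_span_mod (xm_minus m lam) g11 g12 f11 f12"
  unfolding one_gen_qt_codes_sum_eq
proof
  assume all: "{qt_encode m lam (a*g11 + b*f11) (a*g12 + b*f12) | a b. True} = {v. length v = 2*m}"
  show "rows_span_mod (xm_minus m lam) g11 g12 f11 f12"
    unfolding rows_span_mod_def
  proof (intro allI)
    fix u w
    have "qt_encode m lam u w \<in> {v. length v = 2*m}"
      by simp
    then obtain a b where "qt_encode m lam (a*g11 + b*f11) (a*g12 + b*f12) = qt_encode m lam u w"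
      unfolding all[symmetric] by auto
    then show "\<exists>a b. xm_minus m lam dvd a*g11 + b*f11 - u \<and> xm_minus m lam dvd a*g12 + b*f12 - w"
      using qt_encode_eq_iff[OF assms] by blast
  qed
next
  assume span: "rows_span_mod (xm_minus m lam) g11 g12 f11 f12"
  have "v \<in> {qt_encode m lam (a*g11 + b*f11) (a*g12 + b*f12) | a b. True}"
    if "length v = 2*m" for v
  proof -
    obtain u w where "v = qt_encode m lam u w"
      using qt_encode_surj[OF assms \<open>length v = 2*m\<close>] .
    moreover obtain a b where
      "xm_minus m lam dvd a*g11 + b*f11 - u" "xm_minus m lam dvd a*g12 + b*f12 - w"
      using span unfolding rows_span_mod_def by blast
    ultimately have "v = qt_encode m lam (a*g11 + b*f11) (a*g12 + b*f12)"
      by (simp add: qt_encode_eq_iff[OF assms] dvd_diff_commute)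
    then show ?thesis
      by blast
  qed
  then show "{qt_encode m lam (a*g11 + b*f11) (a*g12 + b*f12) | a b. True} = {v. length v = 2*m}"
    by auto
qed

lemma one_gen_qt_codes_inter_eq_zero:
  fixes g11 g12 f11 f12 :: "'a::field_gcd poly"
  assumes "m > 0" "coprime (xm_minus m lam) (g11*f12 - g12*f11)"
  shows "one_gen_qt_code m lam g11 g12 \<inter> one_gen_qt_code m lam f11 f12 = {replicate (2*m) 0}"
proof (intro equalityI subsetI)
  fix x assume x: "x \<in> one_gen_qt_code m lam g11 g12 \<inter> one_gen_qt_code m lam f11 f12"
  obtain a where a: "x = qt_encode m lam (a*g11) (a*g12)"
    using x by (auto simp: one_gen_qt_code_eq)
  obtain b where b: "x = qt_encode m lam (b*f11) (b*f12)"
    using x by (auto simp: one_gen_qt_code_eq)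
  have "qt_encode m lam (a*g11) (a*g12) = qt_encode m lam (b*f11) (b*f12)"
    using a b by simp
  then have "xm_minus m lam dvd a*g11 - b*f11" "xm_minus m lam dvd a*g12 - b*f12"
    by (simp_all add: qt_encode_eq_iff[OF assms(1)])
  then have "xm_minus m lam dvd a*g11 + (-b)*f11" "xm_minus m lam dvd a*g12 + (-b)*f12"
    by simp_all
  then have "xm_minus m lam dvd a"
    by (rule dvd_coeff_if_coprime_det[OF assms(2)])
  then have "x = qt_encode m lam 0 0"
    unfolding a qt_encode_eq_iff[OF assms(1)] by simp
  then show "x \<in> {replicate (2*m) 0}"
    by (simp add: qt_encode_zero)
next
  fix x :: "'a list" assume "x \<in> {replicate (2*m) 0}"
  then show "x \<in> one_gen_qt_code m lam g11 g12 \<inter> one_gen_qt_code m lam f11 f12"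
    by (auto simp: one_gen_qt_code_eq qt_encode_zero[symmetric] intro!: exI[of _ 0])
qed

lemma is_LCP_one_gen_qt_codes_iff:
  fixes g11 g12 f11 f12 :: "'a::field_gcd poly"
  assumes "m > 0"
  shows "is_LCP (2*m) (one_gen_qt_code m lam g11 g12) (one_gen_qt_code m lam f11 f12)
    \<longleftrightarrow> coprime (xm_minus m lam) (g11*f12 - g12*f11)"
  using one_gen_qt_codes_inter_eq_zero[OF assms]
  unfolding is_LCP_def one_gen_qt_codes_sum_eq_all_iff[OF assms] rows_span_mod_iff_coprime_det
  by blast

theorem theorem5p4:
  fixes lam :: "'a::{finite,field_gcd}"
    and m :: nat
    and g11 g12 f11 f12 :: "'a poly"
  assumes "m > 0"
    and "coprime m (card (UNIV :: 'a set))"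
    and "lam \<noteq> 0"
    and "g11 dvd xm_minus m lam"
    and "f11 dvd xm_minus m lam"
  shows "is_LCP (2*m) (one_gen_qt_code m lam g11 g12) (one_gen_qt_code m lam f11 f12)
     \<longleftrightarrow> gcd g11 g12 = 1 \<and> gcd f11 f12 = 1
         \<and> gcd (xm_minus m lam) (g11 * f12 - g12 * f11) = 1"
proof -
  have "coprime g11 g12 \<and> coprime f11 f12" if "coprime (xm_minus m lam) (g11*f12 - g12*f11)"
  proof
    show "coprime g11 g12"
      using assms(4) that by (rule coprime_if_coprime_det)
    have "f11*g12 - f12*g11 = - (g11*f12 - g12*f11)"
      by (simp add: algebra_simps)
    with that have "coprime (xm_minus m lam) (f11*g12 - f12*g11)"
      by (simp only: coprime_minus_right_iff)
    with assms(5) show "coprime f11 f12"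
      by (rule coprime_if_coprime_det)
  qed
  then show ?thesis
    unfolding is_LCP_one_gen_qt_codes_iff[OF assms(1)] coprime_iff_gcd_eq_1[symmetric] by blast
qed

end
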